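(* Let $\mathcal{P}=(|K|,V)$ be a polyhedral model and $x_1,x_2\in|K|$. The following are equivalent: (a) $x_1\approx_\triangle x_2$ in $\mathcal{P}$; (b) $x_1\equiv_\eta x_2$ in $\mathcal{P}$; (c) $\mathbb{F}(x_1)\equiv_\eta\mathbb{F}(x_2)$ in $\mathbb{F}(\mathcal{P})$; (d) $\mathbb{F}(x_1)\approx_\pm\mathbb{F}(x_2)$ in $\mathbb{F}(\mathcal{P})$.
   Context: Fix a set PL of proposition letters. A simplex $\sigma\subseteq\mathbb{R}^m$ is the convex hull of $d+1$ affinely independent points; its faces are the simplices spanned by nonempty subsets of its vertices; its relative interior (cell) is $\tilde\sigma=\{\sum_i\lambda_iv_i:\lambda_i\in(0,1],\sum_i\lambda_i=1\}$. A simplicial complex $K$ is a finite set of simplices in $\mathbb{R}^m$ closed under faces, any two of which intersect in a common face or in $\emptyset$. Its set of cells $\tilde K$ is partially ordered by $\tilde\sigma_1\preceq\tilde\sigma_2$ iff $\tilde\sigma_1$ is contained in the topological closure of $\tilde\sigma_2$. The polyhedron $|K|$ is the union of its simplices with the subspace topology; the cells partition $|K|$. A polyhedral model is $\mathcal{P}=(|K|,V)$ with $V:\mathrm{PL}\to\mathcal{P}(|K|)$, each $V(p)$ a union of cells. Its cell poset model is $\mathbb{F}(\mathcal{P})=(\tilde K,\preceq,\mathcal{V})$ with $\tilde\sigma\in\mathcal{V}(p)$ iff $\tilde\sigma\subseteq V(p)$; $\mathbb{F}(x)$ is the unique cell containing $x$. A topological path from $x$ is a continuous $\pi:[0,1]\to|K|$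 with $\pi(0)=x$. In a poset $(W,\preceq)$, a $\pm$-path of length $\ell\ge2$ from $w$ is $\pi:\{0,\dots,\ell\}\to W$ with $\pi(0)=w$, consecutive elements comparable, $\pi(0)\preceq\pi(1)$ and $\pi(\ell)\preceq\pi(\ell-1)$. SLCS$_\eta$ formulas: $\Phi::=p\mid\neg\Phi\mid\Phi_1\wedge\Phi_2\mid\eta(\Phi_1,\Phi_2)$. On $\mathcal{P}$: $x\models p$ iff $x\in V(p)$; $x\models\eta(\Phi_1,\Phi_2)$ iff some topological path $\pi$ from $x$ has $\pi(1)\models\Phi_2$ and $\pi(r)\models\Phi_1$ for all $r\in[0,1)$. On a poset model $(W,\preceq,\mathcal{V})$: $w\models p$ iff $w\in\mathcal{V}(p)$; $w\models\eta(\Phi_1,\Phi_2)$ iff some $\pm$-path $\pi$ of length $\ell$ from $w$ has $\pi(\ell)\models\Phi_2$ and $\pi(i)\models\Phi_1$ for all $0\le i<\ell$. Negation and conjunction standard. $\equiv_\eta$ is equality of satisfied SLCS$_\eta$ formulas in the given model. A weak simplicial bisimulation on $\mathcal{P}$ is a symmetric $B\subseteq|K|\times|K|$ such that whenever $B(x_1,x_2)$: (1) $x_1\in V(p)\iff x_2\in V(p)$ for all $p$; (2) for each topological path $\pi_1$ from $x_1$ there is a topological path $\pi_2$ from $x_2$ with $B(\pi_1(1),\pi_2(1))$ and for all $r_2\in[0,1)$ some $r_1\in[0,1)$ with $B(\pi_1(r_1),\pi_2(r_2))$; $\approx_\triangle$ is the union of all such relations. A weak $\pm$-bisimulation on a poset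 model $(W,\preceq,\mathcal{V})$ is a symmetric $B\subseteq W\times W$ such that whenever $B(w_1,w_2)$: (1) $w_1\in\mathcal{V}(p)\iff w_2\in\mathcal{V}(p)$ for all $p$; (2) for all $u_1,d_1$ with ($w_1\preceq u_1$ or $u_1\preceq w_1$) and $d_1\preceq u_1$ there is a $\pm$-path $\pi_2$ of length $\ell_2$ from $w_2$ with $B(d_1,\pi_2(\ell_2))$ and for all $0\le j<\ell_2$, $B(w_1,\pi_2(j))$ or $B(u_1,\pi_2(j))$; $\approx_\pm$ is the union of all such relations. *)

theory Defs
  imports "HOL-Analysis.Analysis"
begin

definition vertex_set :: "'a::euclidean_space set \<Rightarrow> bool" where
  "vertex_set C \<longleftrightarrow> finite C \<and> C \<noteq> {} \<and> \<not> affine_dependent C"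

definition is_simplex :: "'a::euclidean_space set \<Rightarrow> bool" where
  "is_simplex \<sigma> \<longleftrightarrow> (\<exists>C. vertex_set C \<and> \<sigma> = convex hull C)"

definition is_face :: "'a::euclidean_space set \<Rightarrow> 'a set \<Rightarrow> bool" where
  "is_face \<tau> \<sigma> \<longleftrightarrow> (\<exists>C D. vertex_set C \<and> \<sigma> = convex hull C \<and> D \<subseteq> C \<and> D \<noteq> {}
                          \<and> \<tau> = convex hull D)"

definition simplicial_complex :: "'a::euclidean_space set set \<Rightarrow> bool" where
  "simplicial_complex K \<longleftrightarrow> finite K \<and> (\<forall>\<sigma>\<in>K. is_simplex \<sigma>)
     \<and> (\<forall>\<sigma>\<in>K. \<forall>\<tau>. is_face \<tau> \<sigma> \<longrightarrow> \<tau> \<in> K)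
     \<and> (\<forall>\<sigma>1\<in>K. \<forall>\<sigma>2\<in>K. \<sigma>1 \<inter> \<sigma>2 = {} \<or> (is_face (\<sigma>1 \<inter> \<sigma>2) \<sigma>1 \<and> is_face (\<sigma>1 \<inter> \<sigma>2) \<sigma>2))"

text \<open>The relative interior (cell) of the simplex spanned by vertex set C.\<close>
definition cell_of :: "'a::euclidean_space set \<Rightarrow> 'a set" where
  "cell_of C = {(\<Sum>v\<in>C. l v *\<^sub>R v) | l. (\<forall>v\<in>C. 0 < l v \<and> l v \<le> 1) \<and> sum l C = 1}"

definition cells :: "'a::euclidean_space set set \<Rightarrow> 'a set set" where
  "cells K = {cell_of C | C. vertex_set C \<and> convex hull C \<in> K}"

definition cell_le :: "'a::euclidean_space set \<Rightarrow> 'a set \<Rightarrow> bool" where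
  "cell_le c1 c2 \<longleftrightarrow> c1 \<subseteq> closure c2"

definition carrier_poly :: "'a::euclidean_space set set \<Rightarrow> 'a set" where
  "carrier_poly K = \<Union>K"

definition polyhedral_model :: "'a::euclidean_space set set \<Rightarrow> ('p \<Rightarrow> 'a set) \<Rightarrow> bool" where
  "polyhedral_model K V \<longleftrightarrow> simplicial_complex K \<and> (\<forall>p. \<exists>S \<subseteq> cells K. V p = \<Union>S)"

definition cell_val :: "'a::euclidean_space set set \<Rightarrow> ('p \<Rightarrow> 'a set) \<Rightarrow> 'p \<Rightarrow> 'a set set" where
  "cell_val K V p = {c \<in> cells K. c \<subseteq> V p}"

definition cellF :: "'a::euclidean_space set set \<Rightarrow> 'a \<Rightarrow> 'a set" where
  "cellF K x = (THE c. c \<in> cells K \<and> x \<in> c)"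

datatype 'p form = Atom 'p | Neg "'p form" | Conj "'p form" "'p form" | Eta "'p form" "'p form"

definition topo_path :: "'a::euclidean_space set set \<Rightarrow> 'a \<Rightarrow> (real \<Rightarrow> 'a) \<Rightarrow> bool" where
  "topo_path K x \<pi> \<longleftrightarrow> continuous_on {0..1} \<pi> \<and> \<pi> ` {0..1} \<subseteq> carrier_poly K \<and> \<pi> 0 = x"

primrec sat_poly :: "'a::euclidean_space set set \<Rightarrow> ('p \<Rightarrow> 'a set) \<Rightarrow> 'a \<Rightarrow> 'p form \<Rightarrow> bool" where
  "sat_poly K V x (Atom p) \<longleftrightarrow> x \<in> V p"
| "sat_poly K V x (Neg \<phi>) \<longleftrightarrow> \<not> sat_poly K V x \<phi>"
| "sat_poly K V x (Conj \<phi> \<psi>) \<longleftrightarrow> sat_poly K V x \<phi> \<and> sat_poly K V x \<psi>"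
| "sat_poly K V x (Eta \<phi> \<psi>) \<longleftrightarrow>
     (\<exists>\<pi>. topo_path K x \<pi> \<and> sat_poly K V (\<pi> 1) \<psi> \<and> (\<forall>r\<in>{0..<1}. sat_poly K V (\<pi> r) \<phi>))"

definition pm_path :: "'w set \<Rightarrow> ('w \<Rightarrow> 'w \<Rightarrow> bool) \<Rightarrow> 'w \<Rightarrow> nat \<Rightarrow> (nat \<Rightarrow> 'w) \<Rightarrow> bool" where
  "pm_path W le w l \<pi> \<longleftrightarrow> l \<ge> 2 \<and> (\<forall>i\<le>l. \<pi> i \<in> W) \<and> \<pi> 0 = w
     \<and> (\<forall>i<l. le (\<pi> i) (\<pi> (Suc i)) \<or> le (\<pi> (Suc i)) (\<pi> i))
     \<and> le (\<pi> 0) (\<pi> 1) \<and> le (\<pi> l) (\<pi> (l - 1))"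

primrec sat_pos :: "'w set \<Rightarrow> ('w \<Rightarrow> 'w \<Rightarrow> bool) \<Rightarrow> ('p \<Rightarrow> 'w set) \<Rightarrow> 'w \<Rightarrow> 'p form \<Rightarrow> bool" where
  "sat_pos W le Val w (Atom p) \<longleftrightarrow> w \<in> Val p"
| "sat_pos W le Val w (Neg \<phi>) \<longleftrightarrow> \<not> sat_pos W le Val w \<phi>"
| "sat_pos W le Val w (Conj \<phi> \<psi>) \<longleftrightarrow> sat_pos W le Val w \<phi> \<and> sat_pos W le Val w \<psi>"
| "sat_pos W le Val w (Eta \<phi> \<psi>) \<longleftrightarrow>
     (\<exists>l \<pi>. pm_path W le w l \<pi> \<and> sat_pos W le Val (\<pi> l) \<psi> \<and> (\<forall>i<l. sat_pos W le Val (\<pi> i) \<phi>))"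

definition eq_eta_poly :: "'a::euclidean_space set set \<Rightarrow> ('p \<Rightarrow> 'a set) \<Rightarrow> 'a \<Rightarrow> 'a \<Rightarrow> bool" where
  "eq_eta_poly K V x1 x2 \<longleftrightarrow> (\<forall>\<phi>. sat_poly K V x1 \<phi> \<longleftrightarrow> sat_poly K V x2 \<phi>)"

definition eq_eta_pos :: "'w set \<Rightarrow> ('w \<Rightarrow> 'w \<Rightarrow> bool) \<Rightarrow> ('p \<Rightarrow> 'w set) \<Rightarrow> 'w \<Rightarrow> 'w \<Rightarrow> bool" where
  "eq_eta_pos W le Val w1 w2 \<longleftrightarrow> (\<forall>\<phi>::'p form. sat_pos W le Val w1 \<phi> \<longleftrightarrow> sat_pos W le Val w2 \<phi>)"

definition weak_simp_bisim :: "'a::euclidean_space set set \<Rightarrow> ('p \<Rightarrow> 'a set) \<Rightarrow> ('a \<times> 'a) set \<Rightarrow> bool" where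
  "weak_simp_bisim K V B \<longleftrightarrow> B \<subseteq> carrier_poly K \<times> carrier_poly K \<and> sym B \<and>
     (\<forall>x1 x2. (x1, x2) \<in> B \<longrightarrow>
        (\<forall>p. x1 \<in> V p \<longleftrightarrow> x2 \<in> V p) \<and>
        (\<forall>\<pi>1. topo_path K x1 \<pi>1 \<longrightarrow>
           (\<exists>\<pi>2. topo_path K x2 \<pi>2 \<and> (\<pi>1 1, \<pi>2 1) \<in> B \<and>
                 (\<forall>r2\<in>{0..<1}. \<exists>r1\<in>{0..<1}. (\<pi>1 r1, \<pi>2 r2) \<in> B))))"

definition approx_tri :: "'a::euclidean_space set set \<Rightarrow> ('p \<Rightarrow> 'a set) \<Rightarrow> 'a \<Rightarrow> 'a \<Rightarrow> bool" where
  "approx_tri K V x1 x2 \<longleftrightarrow> (\<exists>B. weak_simp_bisim K V B \<and> (x1, x2) \<in> B)"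

definition weak_pm_bisim :: "'w set \<Rightarrow> ('w \<Rightarrow> 'w \<Rightarrow> bool) \<Rightarrow> ('p \<Rightarrow> 'w set) \<Rightarrow> ('w \<times> 'w) set \<Rightarrow> bool" where
  "weak_pm_bisim W le Val B \<longleftrightarrow> B \<subseteq> W \<times> W \<and> sym B \<and>
     (\<forall>w1 w2. (w1, w2) \<in> B \<longrightarrow>
        (\<forall>p. w1 \<in> Val p \<longleftrightarrow> w2 \<in> Val p) \<and>
        (\<forall>u1\<in>W. \<forall>d1\<in>W. (le w1 u1 \<or> le u1 w1) \<and> le d1 u1 \<longrightarrow>
           (\<exists>l2 \<pi>2. pm_path W le w2 l2 \<pi>2 \<and> (d1, \<pi>2 l2) \<in> B \<and>
                    (\<forall>j<l2. (w1, \<pi>2 j) \<in> B \<or> (u1, \<pi>2 j) \<in> B))))"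

definition approx_pm :: "'w set \<Rightarrow> ('w \<Rightarrow> 'w \<Rightarrow> bool) \<Rightarrow> ('p \<Rightarrow> 'w set) \<Rightarrow> 'w \<Rightarrow> 'w \<Rightarrow> bool" where
  "approx_pm W le Val w1 w2 \<longleftrightarrow> (\<exists>B. weak_pm_bisim W le Val B \<and> (w1, w2) \<in> B)"

end

theory Submission
  imports Defs
begin

(*
  A point of |K| lies in exactly one cell, and since every point has a neighbourhood that meets
  only cells above its own, a topological path passes through a sequence of pairwise comparable
  cells and thus induces a \<plusminus>-path of cells; conversely a \<plusminus>-path of cells is traced by a
  piecewise linear path. So x and its cell satisfy the same SLCS_eta formulas, giving (b) \<longleftrightarrow> (c). Conversely, both models realise
  only finitely many theories (those of the finitely many cells), so every set of theories is
  defined by a formula; applied to the step required of a bisimulation, this shows that logical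
  equivalence is itself a weak bisimulation, in the polyhedron as well as in the cell poset.
*)

section \<open>Semantics with classical connectives\<close>

locale classical_semantics =
  fixes sat :: "'x \<Rightarrow> 'p form \<Rightarrow> bool"
  assumes sat_Neg [simp]: "sat x (Neg \<phi>) \<longleftrightarrow> \<not> sat x \<phi>"
    and sat_Conj [simp]: "sat x (Conj \<phi> \<psi>) \<longleftrightarrow> sat x \<phi> \<and> sat x \<psi>"
begin

definition theory_of :: "'x \<Rightarrow> 'p form set" where
  "theory_of x = {\<phi>. sat x \<phi>}"

lemma distinguishing_formula:
  assumes "theory_of y \<noteq> theory_of c"
  obtains \<phi> where "sat c \<phi>" "\<not> sat y \<phi>"
proof -
  obtain \<phi> where "sat y \<phi> \<noteq> sat c \<phi>" using assms by (auto simp: theory_of_def)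
  then show ?thesis using that sat_Neg by (cases "sat c \<phi>") blast+
qed

lemma separating_formula:
  assumes "finite S" "theory_of c \<notin> S"
  shows "\<exists>\<theta>. sat c \<theta> \<and> (\<forall>y. theory_of y \<in> S \<longrightarrow> \<not> sat y \<theta>)"
  using assms
proof (induction S rule: finite_induct)
  case empty
  show ?case by (intro exI[of _ "Neg (Conj (Atom undefined) (Neg (Atom undefined)))"]) simp
next
  case (insert T S)
  then obtain \<theta> where \<theta>: "sat c \<theta>" "\<forall>y. theory_of y \<in> S \<longrightarrow> \<not> sat y \<theta>" by auto
  show ?case
  proof (cases "\<exists>y0. theory_of y0 = T")
    case True
    then obtain y0 where y0: "theory_of y0 = T" by blast
    obtain \<phi> where "sat c \<phi>" "\<not> sat y0 \<phi>"
      using distinguishing_formula[of y0 c] y0 insert.prems by auto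
    then have "\<forall>y. theory_of y = T \<longrightarrow> \<not> sat y \<phi>"
      using y0 by (auto simp: theory_of_def)
    then show ?thesis using \<theta> \<open>sat c \<phi>\<close> by (intro exI[of _ "Conj \<theta> \<phi>"]) auto
  qed (use \<theta> in auto)
qed

lemma definable_theory_sets:
  assumes "finite (theory_of ` X)"
  shows "\<exists>\<theta>. \<forall>y\<in>X. sat y \<theta> \<longleftrightarrow> theory_of y \<in> T"
proof -
  have characteristic: "\<exists>\<theta>. \<forall>y\<in>X. sat y \<theta> \<longleftrightarrow> theory_of y = theory_of c" for c
  proof -
    obtain \<theta> where "sat c \<theta>" and \<theta>: "\<forall>y. theory_of y \<in> theory_of ` X - {theory_of c} \<longrightarrow> \<not> sat y \<theta>"
      using separating_formula[of "theory_of ` X - {theory_of c}" c] assms by auto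
    then have "theory_of y = theory_of c \<Longrightarrow> sat y \<theta>" for y by (auto simp: theory_of_def)
    then show ?thesis using \<theta> by blast
  qed
  have "\<exists>\<theta>. \<forall>y\<in>X. sat y \<theta> \<longleftrightarrow> theory_of y \<in> S" if "finite S" "S \<subseteq> theory_of ` X" for S
    using that
  proof (induction S rule: finite_induct)
    case empty
    show ?case by (intro exI[of _ "Conj (Atom undefined) (Neg (Atom undefined))"]) simp
  next
    case (insert T S)
    obtain c where "T = theory_of c" using insert.prems by auto
    moreover obtain \<theta>1 where "\<forall>y\<in>X. sat y \<theta>1 \<longleftrightarrow> theory_of y \<in> S" using insert by auto
    moreover obtain \<theta>2 where "\<forall>y\<in>X. sat y \<theta>2 \<longleftrightarrow> theory_of y = theory_of c" using characteristic by blast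
    ultimately show ?case by (intro exI[of _ "Neg (Conj (Neg \<theta>1) (Neg \<theta>2))"]) auto
  qed
  from this[of "theory_of ` X \<inter> T"] show ?thesis using assms by auto
qed

lemma bisimulation_preserves_formulas:
  assumes "sym B"
    and atoms: "\<And>a b p. (a, b) \<in> B \<Longrightarrow> sat a (Atom p) \<Longrightarrow> sat b (Atom p)"
    and eta: "\<And>\<phi> \<psi> a b. (\<And>a b. (a, b) \<in> B \<Longrightarrow> sat a \<phi> \<longleftrightarrow> sat b \<phi>)
               \<Longrightarrow> (\<And>a b. (a, b) \<in> B \<Longrightarrow> sat a \<psi> \<longleftrightarrow> sat b \<psi>)
               \<Longrightarrow> (a, b) \<in> B \<Longrightarrow> sat a (Eta \<phi> \<psi>) \<Longrightarrow> sat b (Eta \<phi> \<psi>)"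
    and "(a, b) \<in> B"
  shows "sat a \<phi> \<longleftrightarrow> sat b \<phi>"
  using \<open>(a, b) \<in> B\<close>
proof (induction \<phi> arbitrary: a b)
  case (Atom p)
  then show ?case using atoms \<open>sym B\<close> by (meson symD)
next
  case (Eta \<phi> \<psi>)
  then show ?case using eta[of \<phi> \<psi>] \<open>sym B\<close> by (meson symD)
qed simp_all

end

interpretation poly: classical_semantics "sat_poly K V" for K V
  by unfold_locales simp_all

interpretation pos: classical_semantics "sat_pos W le Val" for W le Val
  by unfold_locales simp_all

lemma eq_eta_pos_iff:
  "eq_eta_pos W le Val a b \<longleftrightarrow> pos.theory_of W le Val a = pos.theory_of W le Val b"
  by (auto simp: eq_eta_pos_def pos.theory_of_def)

section \<open>Zigzags and \<plusminus>-paths\<close>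

definition zigzag :: "'w set \<Rightarrow> ('w \<Rightarrow> 'w \<Rightarrow> bool) \<Rightarrow> nat \<Rightarrow> (nat \<Rightarrow> 'w) \<Rightarrow> bool" where
  "zigzag W le m \<sigma> \<longleftrightarrow> \<sigma> ` {..m} \<subseteq> W \<and> (\<forall>i<m. le (\<sigma> i) (\<sigma> (Suc i)) \<or> le (\<sigma> (Suc i)) (\<sigma> i))"

lemma pm_path_iff_zigzag:
  "pm_path W le w l \<pi> \<longleftrightarrow>
     2 \<le> l \<and> zigzag W le l \<pi> \<and> \<pi> 0 = w \<and> le (\<pi> 0) (\<pi> 1) \<and> le (\<pi> l) (\<pi> (l - 1))"
  by (auto simp: pm_path_def zigzag_def)

lemma zigzag_prefix: "zigzag W le m \<sigma> \<Longrightarrow> k \<le> m \<Longrightarrow> zigzag W le k \<sigma>"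
  by (auto simp: zigzag_def)

lemma zigzag_snoc:
  assumes "zigzag W le m c" "w \<in> W" "le (c m) w \<or> le w (c m)"
  shows "zigzag W le (Suc m) (c(Suc m := w))"
  using assms by (auto simp: zigzag_def less_Suc_eq)

lemma zigzag_shift: "zigzag W le (Suc n) \<rho> \<Longrightarrow> zigzag W le n (\<lambda>i. \<rho> (Suc i))"
  by (auto simp: zigzag_def)

definition append_seq :: "(nat \<Rightarrow> 'w) \<Rightarrow> nat \<Rightarrow> (nat \<Rightarrow> 'w) \<Rightarrow> nat \<Rightarrow> 'w" where
  "append_seq \<sigma> m \<tau> i = (if i \<le> m then \<sigma> i else \<tau> (i - m))"

lemma append_seq_0 [simp]: "append_seq \<sigma> m \<tau> 0 = \<sigma> 0"
  by (simp add: append_seq_def)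

lemma append_seq_last: "\<tau> 0 = \<sigma> m \<Longrightarrow> append_seq \<sigma> m \<tau> (m + n) = \<tau> n"
  by (simp add: append_seq_def)

lemma append_seq_image: "append_seq \<sigma> m \<tau> ` {..m + n} \<subseteq> \<sigma> ` {..m} \<union> \<tau> ` {..n}"
  by (auto simp: append_seq_def)

lemma append_seq_tail: "\<tau> 0 = \<sigma> m \<Longrightarrow> m \<le> i \<Longrightarrow> append_seq \<sigma> m \<tau> i = \<tau> (i - m)"
  by (simp add: append_seq_def)

lemma zigzag_append:
  assumes "zigzag W le m \<sigma>" "zigzag W le n \<tau>" "\<tau> 0 = \<sigma> m"
  shows "zigzag W le (m + n) (append_seq \<sigma> m \<tau>)"
  unfolding zigzag_def
proof
  show "append_seq \<sigma> m \<tau> ` {..m + n} \<subseteq> W"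
    using append_seq_image[of \<sigma> m \<tau> n] assms(1,2) unfolding zigzag_def by blast
  show "\<forall>i<m + n. le (append_seq \<sigma> m \<tau> i) (append_seq \<sigma> m \<tau> (Suc i))
                \<or> le (append_seq \<sigma> m \<tau> (Suc i)) (append_seq \<sigma> m \<tau> i)"
  proof (intro allI impI)
    fix i assume i: "i < m + n"
    show "le (append_seq \<sigma> m \<tau> i) (append_seq \<sigma> m \<tau> (Suc i))
                \<or> le (append_seq \<sigma> m \<tau> (Suc i)) (append_seq \<sigma> m \<tau> i)"
    proof (cases "i < m")
      case True
      then show ?thesis using assms(1) by (simp add: append_seq_def zigzag_def)
    next
      case False
      then have "i - m < n" "Suc i - m = Suc (i - m)" using i by auto
      then show ?thesis using False assms(2,3)
        by (simp add: append_seq_tail zigzag_def)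
    qed
  qed
qed

lemma pm_path_close_zigzag:
  assumes "zigzag W le m \<sigma>" "le (\<sigma> 0) (\<sigma> 0)" "d \<in> W" "le d (\<sigma> m)"
  obtains \<rho> where "pm_path W le (\<sigma> 0) (Suc (Suc m)) \<rho>" "\<rho> (Suc (Suc m)) = d"
    "\<rho> ` {..<Suc (Suc m)} \<subseteq> \<sigma> ` {..m}"
proof
  \<comment> \<open>repeating the first point supplies the initial up-step of a \<plusminus>-path\<close>
  define \<rho> where "\<rho> i = (if i = 0 then \<sigma> 0 else if i \<le> Suc m then \<sigma> (i - 1) else d)" for i
  show "\<rho> (Suc (Suc m)) = d" by (simp add: \<rho>_def)
  show "\<rho> ` {..<Suc (Suc m)} \<subseteq> \<sigma> ` {..m}" by (auto simp: \<rho>_def)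
  have "zigzag W le (Suc (Suc m)) \<rho>"
    unfolding zigzag_def
  proof (intro conjI allI impI)
    show "\<rho> ` {..Suc (Suc m)} \<subseteq> W"
      using assms(1,3) by (auto simp: zigzag_def \<rho>_def)
    fix i assume "i < Suc (Suc m)"
    then consider "i = 0" | k where "i = Suc k" "k < m" | "i = Suc m"
      by (cases i) (auto simp: less_Suc_eq)
    then show "le (\<rho> i) (\<rho> (Suc i)) \<or> le (\<rho> (Suc i)) (\<rho> i)"
      by cases (use assms in \<open>auto simp: \<rho>_def zigzag_def\<close>)
  qed
  then show "pm_path W le (\<sigma> 0) (Suc (Suc m)) \<rho>"
    using assms by (simp add: pm_path_iff_zigzag \<rho>_def)
qed

section \<open>Logical equivalence and weak \<plusminus>-bisimilarity on posets\<close>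

lemma weak_pm_bisimD:
  assumes "weak_pm_bisim W le Val B" "(w1, w2) \<in> B" "u1 \<in> W" "d1 \<in> W"
    "le w1 u1 \<or> le u1 w1" "le d1 u1"
  obtains l2 \<pi>2 where "pm_path W le w2 l2 \<pi>2" "(d1, \<pi>2 l2) \<in> B"
    "\<forall>j<l2. (w1, \<pi>2 j) \<in> B \<or> (u1, \<pi>2 j) \<in> B"
  using assms unfolding weak_pm_bisim_def by blast

context
  fixes W :: "'w set" and le :: "'w \<Rightarrow> 'w \<Rightarrow> bool" and Val :: "'p \<Rightarrow> 'w set"
  assumes le_refl: "\<And>w. w \<in> W \<Longrightarrow> le w w"
begin

text \<open>Each step from \<open>\<pi> k\<close> to \<open>\<pi> (Suc k)\<close> is matched by the bisimulation clause with
  \<open>u1 = d1 = \<pi> (Suc k)\<close>, which reflexivity makes admissible.\<close>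

lemma weak_pm_bisim_match_zigzag:
  assumes B: "weak_pm_bisim W le Val B" and "(\<pi> 0, w2) \<in> B"
    and "zigzag W le k \<pi>" and "\<pi> ` {..k} \<subseteq> \<Phi>"
    and \<Phi>: "\<And>a b. (a, b) \<in> B \<Longrightarrow> a \<in> \<Phi> \<Longrightarrow> b \<in> \<Phi>"
  shows "\<exists>m \<sigma>. zigzag W le m \<sigma> \<and> \<sigma> 0 = w2 \<and> (\<pi> k, \<sigma> m) \<in> B \<and> \<sigma> ` {..m} \<subseteq> \<Phi>"
  using assms(3,4)
proof (induction k)
  case 0
  have "w2 \<in> W" using B \<open>(\<pi> 0, w2) \<in> B\<close> by (auto simp: weak_pm_bisim_def)
  moreover have "w2 \<in> \<Phi>" using \<Phi> \<open>(\<pi> 0, w2) \<in> B\<close> "0.prems"(2) by auto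
  ultimately show ?case using \<open>(\<pi> 0, w2) \<in> B\<close>
    by (intro exI[of _ 0] exI[of _ "\<lambda>_. w2"]) (auto simp: zigzag_def)
next
  case (Suc k)
  have "zigzag W le k \<pi>" "\<pi> ` {..k} \<subseteq> \<Phi>"
    using Suc.prems zigzag_prefix[of W le "Suc k" \<pi> k] by auto
  then obtain m \<sigma> where \<sigma>: "zigzag W le m \<sigma>" "\<sigma> 0 = w2" "(\<pi> k, \<sigma> m) \<in> B" "\<sigma> ` {..m} \<subseteq> \<Phi>"
    using Suc.IH by blast
  have \<pi>: "\<pi> (Suc k) \<in> W" "le (\<pi> k) (\<pi> (Suc k)) \<or> le (\<pi> (Suc k)) (\<pi> k)"
    using Suc.prems(1) by (auto simp: zigzag_def)
  obtain n \<tau> where \<tau>: "pm_path W le (\<sigma> m) n \<tau>" "(\<pi> (Suc k), \<tau> n) \<in> B"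
    "\<forall>j<n. (\<pi> k, \<tau> j) \<in> B \<or> (\<pi> (Suc k), \<tau> j) \<in> B"
    using weak_pm_bisimD[OF B \<sigma>(3) \<pi>(1) \<pi>(1) \<pi>(2) le_refl[OF \<pi>(1)]] .
  have "\<tau> ` {..n} \<subseteq> \<Phi>"
  proof
    fix w assume "w \<in> \<tau> ` {..n}"
    then obtain j where "j \<le> n" "w = \<tau> j" by blast
    moreover have "\<pi> k \<in> \<Phi>" "\<pi> (Suc k) \<in> \<Phi>" using Suc.prems(2) by auto
    ultimately show "w \<in> \<Phi>" using \<tau>(2,3) \<Phi> by (cases "j = n") (auto simp: less_le)
  qed
  then have "append_seq \<sigma> m \<tau> ` {..m + n} \<subseteq> \<Phi>"
    using append_seq_image[of \<sigma> m \<tau> n] \<sigma>(4) by blast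
  moreover have "zigzag W le (m + n) (append_seq \<sigma> m \<tau>)"
    using zigzag_append[OF \<sigma>(1)] \<tau>(1) by (simp add: pm_path_iff_zigzag)
  moreover have "append_seq \<sigma> m \<tau> (m + n) = \<tau> n"
    using \<tau>(1) by (simp add: append_seq_last pm_path_def)
  ultimately show ?case using \<sigma>(2) \<tau>(2) by (metis append_seq_0)
qed

lemma weak_pm_bisim_preserves_eta:
  assumes B: "weak_pm_bisim W le Val B" "(w1, w2) \<in> B"
    and \<phi>: "\<And>a b. (a, b) \<in> B \<Longrightarrow> sat_pos W le Val a \<phi> \<longleftrightarrow> sat_pos W le Val b \<phi>"
    and \<psi>: "\<And>a b. (a, b) \<in> B \<Longrightarrow> sat_pos W le Val a \<psi> \<longleftrightarrow> sat_pos W le Val b \<psi>"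
    and "sat_pos W le Val w1 (Eta \<phi> \<psi>)"
  shows "sat_pos W le Val w2 (Eta \<phi> \<psi>)"
proof -
  define \<Phi> where "\<Phi> = {w. sat_pos W le Val w \<phi>}"
  obtain l \<pi> where \<pi>: "pm_path W le w1 l \<pi>" "sat_pos W le Val (\<pi> l) \<psi>" "\<pi> ` {..<l} \<subseteq> \<Phi>"
    using assms(5) by (auto simp: \<Phi>_def)
  have l: "2 \<le> l" "zigzag W le l \<pi>" "\<pi> 0 = w1" "le (\<pi> l) (\<pi> (l - 1))"
    using \<pi>(1) by (auto simp: pm_path_iff_zigzag)
  have \<pi>W: "\<pi> (l - 1) \<in> W" "\<pi> l \<in> W" using l(2) by (auto simp: zigzag_def)
  have "\<pi> ` {..l - 1} \<subseteq> \<Phi>" using \<pi>(3) l(1) by auto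
  moreover have \<Phi>B: "b \<in> \<Phi>" if "(a, b) \<in> B" "a \<in> \<Phi>" for a b
    using \<phi>[OF that(1)] that(2) by (simp add: \<Phi>_def)
  ultimately obtain m \<sigma> where \<sigma>: "zigzag W le m \<sigma>" "\<sigma> 0 = w2" "(\<pi> (l - 1), \<sigma> m) \<in> B" "\<sigma> ` {..m} \<subseteq> \<Phi>"
    using weak_pm_bisim_match_zigzag[OF B(1) _ zigzag_prefix[OF l(2), of "l - 1"], of w2 \<Phi>]
      B(2) l(3) by auto
  obtain n \<tau> where \<tau>: "pm_path W le (\<sigma> m) n \<tau>" "(\<pi> l, \<tau> n) \<in> B"
    "\<forall>j<n. (\<pi> (l - 1), \<tau> j) \<in> B"
    by (rule weak_pm_bisimD[OF B(1) \<sigma>(3) \<pi>W disjI1[OF le_refl[OF \<pi>W(1)]] l(4)]) auto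
  have n: "2 \<le> n" "zigzag W le (n - 1) \<tau>" "\<tau> 0 = \<sigma> m" "le (\<tau> n) (\<tau> (n - 1))" "\<tau> n \<in> W"
    using \<tau>(1) zigzag_prefix[of W le n \<tau> "n - 1"] by (auto simp: pm_path_iff_zigzag zigzag_def)
  have "\<tau> ` {..n - 1} \<subseteq> \<Phi>"
  proof
    fix w assume "w \<in> \<tau> ` {..n - 1}"
    then obtain j where "j \<le> n - 1" "w = \<tau> j" by blast
    moreover have "j < n" using \<open>j \<le> n - 1\<close> n(1) by linarith
    moreover have "\<pi> (l - 1) \<in> \<Phi>" using \<pi>(3) l(1) by auto
    ultimately show "w \<in> \<Phi>" using \<tau>(3) \<Phi>B by blast
  qed
  define \<rho> where "\<rho> = append_seq \<sigma> m \<tau>"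
  have \<rho>: "zigzag W le (m + (n - 1)) \<rho>" "\<rho> 0 = w2" "\<rho> (m + (n - 1)) = \<tau> (n - 1)"
    "\<rho> ` {..m + (n - 1)} \<subseteq> \<Phi>"
    using zigzag_append[OF \<sigma>(1) n(2,3)] \<sigma>(2,4) append_seq_last[of \<tau> \<sigma> m "n - 1", OF n(3)]
      append_seq_image[of \<sigma> m \<tau> "n - 1"] \<open>\<tau> ` {..n - 1} \<subseteq> \<Phi>\<close>
    unfolding \<rho>_def by (simp_all, blast)
  obtain \<rho>' where \<rho>': "pm_path W le w2 (Suc (Suc (m + (n - 1)))) \<rho>'"
    "\<rho>' (Suc (Suc (m + (n - 1)))) = \<tau> n" "\<rho>' ` {..<Suc (Suc (m + (n - 1)))} \<subseteq> \<Phi>"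
  proof (rule pm_path_close_zigzag[OF \<rho>(1) _ n(5)])
    show "le (\<rho> 0) (\<rho> 0)" using \<rho>(1) le_refl by (auto simp: zigzag_def)
    show "le (\<tau> n) (\<rho> (m + (n - 1)))" using n(4) \<rho>(3) by simp
  qed (use \<rho>(2,4) in auto)
  have "sat_pos W le Val (\<tau> n) \<psi>" using \<psi>[OF \<tau>(2)] \<pi>(2) by blast
  moreover have "\<forall>i<Suc (Suc (m + (n - 1))). sat_pos W le Val (\<rho>' i) \<phi>"
    using \<rho>'(3) by (auto simp: \<Phi>_def)
  ultimately show ?thesis using \<rho>'(1,2) by (metis sat_pos.simps(4))
qed

lemma weak_pm_bisim_imp_eq_eta_pos:
  assumes B: "weak_pm_bisim W le Val B" and "(w1, w2) \<in> B"
  shows "eq_eta_pos W le Val w1 w2"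
  unfolding eq_eta_pos_def
proof
  fix \<phi> :: "'p form"
  show "sat_pos W le Val w1 \<phi> \<longleftrightarrow> sat_pos W le Val w2 \<phi>"
  proof (rule pos.bisimulation_preserves_formulas[of B])
    show "sym B" using B by (simp add: weak_pm_bisim_def)
    show "sat_pos W le Val b (Atom p)" if "(a, b) \<in> B" "sat_pos W le Val a (Atom p)" for a b p
      using B that unfolding weak_pm_bisim_def by auto
    show "sat_pos W le Val b (Eta \<phi>' \<psi>)"
      if "\<And>a b. (a, b) \<in> B \<Longrightarrow> sat_pos W le Val a \<phi>' \<longleftrightarrow> sat_pos W le Val b \<phi>'"
        "\<And>a b. (a, b) \<in> B \<Longrightarrow> sat_pos W le Val a \<psi> \<longleftrightarrow> sat_pos W le Val b \<psi>"
        "(a, b) \<in> B" "sat_pos W le Val a (Eta \<phi>' \<psi>)" for \<phi>' \<psi> a b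
      by (rule weak_pm_bisim_preserves_eta[OF B that(3) that(1,2,4)])
  qed (fact \<open>(w1, w2) \<in> B\<close>)
qed

lemma eq_eta_pos_weak_pm_bisim:
  assumes "finite W"
  shows "weak_pm_bisim W le Val {(a, b). a \<in> W \<and> b \<in> W \<and> eq_eta_pos W le Val a b}"
    (is "weak_pm_bisim W le Val ?B")
  unfolding weak_pm_bisim_def
proof (intro conjI allI impI ballI)
  show "?B \<subseteq> W \<times> W" by auto
  show "sym ?B" by (auto simp: sym_def eq_eta_pos_def)
next
  fix a b p assume "(a, b) \<in> ?B"
  then have "sat_pos W le Val a (Atom p) \<longleftrightarrow> sat_pos W le Val b (Atom p)"
    unfolding eq_eta_pos_def by blast
  then show "a \<in> Val p \<longleftrightarrow> b \<in> Val p" by simp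
next
  fix a b u1 d1 assume ab: "(a, b) \<in> ?B" and u1: "u1 \<in> W" and d1: "d1 \<in> W"
    and steps: "(le a u1 \<or> le u1 a) \<and> le d1 u1"
  let ?th = "pos.theory_of W le Val"
  have fin: "finite (?th ` W)" using assms by simp
  obtain \<theta>A where \<theta>A: "\<forall>y\<in>W. sat_pos W le Val y \<theta>A \<longleftrightarrow> ?th y \<in> ?th ` {a, u1}"
    using pos.definable_theory_sets[OF fin] by blast
  obtain \<theta>D where \<theta>D: "\<forall>y\<in>W. sat_pos W le Val y \<theta>D \<longleftrightarrow> ?th y \<in> {?th d1}"
    using pos.definable_theory_sets[OF fin] by blast
  \<comment> \<open>the step a, u1, d1 is a \<plusminus>-path whose trace is described by \<open>Eta \<theta>A \<theta>D\<close>\<close>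
  define \<sigma> where "\<sigma> i = (if i = 0 then a else u1)" for i :: nat
  have "zigzag W le 1 \<sigma>" using ab u1 steps by (auto simp: zigzag_def \<sigma>_def)
  moreover have "le (\<sigma> 0) (\<sigma> 0)" using ab le_refl by (simp add: \<sigma>_def)
  moreover have "le d1 (\<sigma> 1)" using steps by (simp add: \<sigma>_def)
  ultimately obtain \<rho> where "pm_path W le (\<sigma> 0) (Suc (Suc 1)) \<rho>" "\<rho> (Suc (Suc 1)) = d1"
    "\<rho> ` {..<Suc (Suc 1)} \<subseteq> \<sigma> ` {..1}"
    by (rule pm_path_close_zigzag[OF _ _ d1])
  moreover have "\<sigma> ` {..1} = {a, u1}" by (auto simp: \<sigma>_def atMost_Suc)
  ultimately have \<rho>: "pm_path W le a 3 \<rho>" "\<rho> 3 = d1" "\<rho> ` {..<3} \<subseteq> {a, u1}"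
    by (simp_all add: \<sigma>_def numeral_3_eq_3)
  have "\<forall>i<3. sat_pos W le Val (\<rho> i) \<theta>A"
  proof (intro allI impI)
    fix i :: nat assume "i < 3"
    then have "\<rho> i \<in> W" "\<rho> i \<in> {a, u1}" using \<rho>(1,3) by (auto simp: pm_path_def)
    then show "sat_pos W le Val (\<rho> i) \<theta>A" using \<theta>A by blast
  qed
  moreover have "sat_pos W le Val (\<rho> 3) \<theta>D" using \<theta>D \<rho>(2) d1 by simp
  ultimately have "sat_pos W le Val a (Eta \<theta>A \<theta>D)" using \<rho>(1) by (metis sat_pos.simps(4))
  then have "sat_pos W le Val b (Eta \<theta>A \<theta>D)" using ab unfolding eq_eta_pos_def by blast
  then obtain l2 \<pi>2 where \<pi>2: "pm_path W le b l2 \<pi>2" "sat_pos W le Val (\<pi>2 l2) \<theta>D"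
    "\<forall>j<l2. sat_pos W le Val (\<pi>2 j) \<theta>A" by auto
  have \<pi>2W: "\<pi>2 j \<in> W" if "j \<le> l2" for j using \<pi>2(1) that by (simp add: pm_path_def)
  have "(d1, \<pi>2 l2) \<in> ?B"
    using \<theta>D \<pi>2(2) \<pi>2W[of l2] d1 by (simp add: eq_eta_pos_iff)
  moreover have "(a, \<pi>2 j) \<in> ?B \<or> (u1, \<pi>2 j) \<in> ?B" if "j < l2" for j
    using \<theta>A \<pi>2(3) \<pi>2W[of j] that ab u1 by (auto simp: eq_eta_pos_iff)
  ultimately show "\<exists>l2 \<pi>2. pm_path W le b l2 \<pi>2 \<and> (d1, \<pi>2 l2) \<in> ?B \<and>
                 (\<forall>j<l2. (a, \<pi>2 j) \<in> ?B \<or> (u1, \<pi>2 j) \<in> ?B)"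
    using \<pi>2(1) by blast
qed

end

section \<open>Cells of a simplicial complex\<close>

lemma cell_of_eq_rel_interior:
  assumes "vertex_set C"
  shows "cell_of C = rel_interior (convex hull C)"
proof -
  have ind: "\<not> affine_dependent C" and fin: "finite C" using assms by (auto simp: vertex_set_def)
  have "u v \<le> 1" if "\<forall>x\<in>C. 0 < u x" "sum u C = 1" "v \<in> C" for u :: "'a \<Rightarrow> real" and v
    using member_le_sum[of v C u] fin that by (auto simp: less_imp_le)
  then show ?thesis
    unfolding rel_interior_convex_hull_explicit[OF ind] cell_of_def by fastforce
qed

lemma is_face_imp_face_of: "is_face \<tau> \<sigma> \<Longrightarrow> \<tau> face_of \<sigma>"
  unfolding is_face_def vertex_set_def using face_of_convex_hull_affine_independent by blast

lemma cell_le_refl: "cell_le c c"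
  by (simp add: cell_le_def closure_subset)

lemma linepath_in_rel_interior:
  fixes S :: "'a::euclidean_space set"
  assumes "convex S" "a \<in> rel_interior S" "b \<in> closure S" "0 \<le> t" "t < 1"
  shows "linepath a b t \<in> rel_interior S"
proof -
  have "b - (1 - t) *\<^sub>R (b - a) \<in> rel_interior S"
    using assms by (intro rel_interior_closure_convex_shrink) auto
  moreover have "linepath a b t = b - (1 - t) *\<^sub>R (b - a)"
    by (simp add: linepath_def algebra_simps)
  ultimately show ?thesis by simp
qed

lemma joinpaths_image_subset:
  assumes "g1 ` {0..1} \<subseteq> S" "g2 ` {0..<1} \<subseteq> T"
  shows "(g1 +++ g2) ` {0..<1} \<subseteq> S \<union> T"
proof
  fix y assume "y \<in> (g1 +++ g2) ` {0..<1::real}"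
  then obtain t where t: "t \<in> {0..<1}" "y = (g1 +++ g2) t" by blast
  show "y \<in> S \<union> T"
  proof (cases "t \<le> 1/2")
    case True
    then show ?thesis using t assms(1) by (auto simp: joinpaths_def)
  next
    case False
    then have "y = g2 (2 * t - 1)" "2 * t - 1 \<in> {0..<1}" using t by (auto simp: joinpaths_def)
    then show ?thesis using assms(2) by blast
  qed
qed

context
  fixes K :: "'a::euclidean_space set set"
  assumes K: "simplicial_complex K"
begin

lemma simplex_of_complex:
  assumes "\<sigma> \<in> K"
  obtains C where "vertex_set C" "\<sigma> = convex hull C"
  using K assms by (auto simp: simplicial_complex_def is_simplex_def)

lemma complex_simplex:
  assumes "\<sigma> \<in> K"
  shows "compact \<sigma>" "convex \<sigma>" "\<sigma> \<noteq> {}"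
proof -
  obtain C where "vertex_set C" "\<sigma> = convex hull C" using simplex_of_complex assms by blast
  then show "compact \<sigma>" "convex \<sigma>" "\<sigma> \<noteq> {}"
    by (auto simp: vertex_set_def compact_convex_hull finite_imp_compact)
qed

lemma finite_complex: "finite K"
  using K by (simp add: simplicial_complex_def)

lemma cells_eq: "cells K = rel_interior ` K"
proof
  show "cells K \<subseteq> rel_interior ` K"
    unfolding cells_def using cell_of_eq_rel_interior by auto
  show "rel_interior ` K \<subseteq> cells K"
  proof
    fix c assume "c \<in> rel_interior ` K"
    then obtain \<sigma> C where "\<sigma> \<in> K" "c = rel_interior \<sigma>" "vertex_set C" "\<sigma> = convex hull C"
      using simplex_of_complex by blast
    then show "c \<in> cells K" unfolding cells_def using cell_of_eq_rel_interior by auto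
  qed
qed

lemma closure_rel_interior_simplex: "\<sigma> \<in> K \<Longrightarrow> closure (rel_interior \<sigma>) = \<sigma>"
  using complex_simplex convex_closure_rel_interior closure_closed compact_imp_closed by metis

lemma cell_nonempty: "c \<in> cells K \<Longrightarrow> c \<noteq> {}"
  using complex_simplex rel_interior_eq_empty by (auto simp: cells_eq)

lemma finite_cells: "finite (cells K)"
  by (simp add: cells_eq finite_complex)

lemma mem_rel_interior_face:
  assumes "\<sigma> \<in> K" "y \<in> \<sigma>"
  obtains \<tau> where "\<tau> \<in> K" "\<tau> \<subseteq> \<sigma>" "y \<in> rel_interior \<tau>"
proof -
  obtain C where C: "vertex_set C" "\<sigma> = convex hull C" using simplex_of_complex assms(1) by blast
  have fin: "finite C" and ind: "\<not> affine_dependent C" using C by (auto simp: vertex_set_def)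
  obtain u where u: "\<forall>x\<in>C. 0 \<le> u x" "sum u C = 1" "(\<Sum>x\<in>C. u x *\<^sub>R x) = y"
    using assms C convex_hull_finite[OF fin] by auto
  define D where "D = {v\<in>C. 0 < u v}"
  have DC: "D \<subseteq> C" by (auto simp: D_def)
  have "sum u C = sum u D" "(\<Sum>x\<in>C. u x *\<^sub>R x) = (\<Sum>x\<in>D. u x *\<^sub>R x)"
    unfolding D_def using fin u(1)
    by (auto intro!: sum.mono_neutral_right simp: order.order_iff_strict)
  then have D: "sum u D = 1" "(\<Sum>x\<in>D. u x *\<^sub>R x) = y" using u by simp_all
  have "y \<in> rel_interior (convex hull D)"
    unfolding rel_interior_convex_hull_explicit[OF affine_independent_subset[OF ind DC]]
    using D by (auto simp: D_def)
  moreover have "D \<noteq> {}" using D(1) by auto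
  then have "convex hull D \<in> K"
    using K assms(1) C DC unfolding simplicial_complex_def is_face_def by blast
  moreover have "convex hull D \<subseteq> \<sigma>" using C DC hull_mono by blast
  ultimately show ?thesis using that by blast
qed

lemma rel_interior_simplex_unique:
  assumes "\<tau>1 \<in> K" "\<tau>2 \<in> K" "y \<in> rel_interior \<tau>1" "y \<in> rel_interior \<tau>2"
  shows "\<tau>1 = \<tau>2"
proof -
  have y: "y \<in> \<tau>1 \<inter> \<tau>2" using assms rel_interior_subset by blast
  then have "(\<tau>1 \<inter> \<tau>2) face_of \<tau>1" "(\<tau>1 \<inter> \<tau>2) face_of \<tau>2"
    using K assms(1,2) is_face_imp_face_of unfolding simplicial_complex_def by blast+
  then have "\<tau>1 \<inter> \<tau>2 = \<tau>1" "\<tau>1 \<inter> \<tau>2 = \<tau>2"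
    using face_of_disjoint_rel_interior y assms(3,4) by blast+
  then show ?thesis by simp
qed

lemma cellF_cell:
  assumes "y \<in> carrier_poly K"
  shows "cellF K y \<in> cells K" "y \<in> cellF K y"
proof -
  obtain \<tau> where "\<tau> \<in> K" "y \<in> rel_interior \<tau>"
    using assms mem_rel_interior_face unfolding carrier_poly_def by blast
  then have "\<exists>!c. c \<in> cells K \<and> y \<in> c"
    using rel_interior_simplex_unique by (auto simp: cells_eq)
  then have "cellF K y \<in> cells K \<and> y \<in> cellF K y" unfolding cellF_def by (rule theI')
  then show "cellF K y \<in> cells K" "y \<in> cellF K y" by auto
qed

lemma cellF_eq:
  assumes "c \<in> cells K" "y \<in> c"
  shows "cellF K y = c"
proof -
  have "\<exists>!c'. c' \<in> cells K \<and> y \<in> c'"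
    using assms rel_interior_simplex_unique by (auto simp: cells_eq)
  then show ?thesis unfolding cellF_def by (rule the1_equality) (use assms in blast)
qed

lemma cell_subset_carrier: "c \<in> cells K \<Longrightarrow> c \<subseteq> carrier_poly K"
  using rel_interior_subset by (fastforce simp: cells_eq carrier_poly_def)

lemma cellF_subset_simplex:
  assumes "\<sigma> \<in> K" "y \<in> \<sigma>"
  shows "cellF K y \<subseteq> \<sigma>"
proof -
  obtain \<tau> where "\<tau> \<in> K" "\<tau> \<subseteq> \<sigma>" "y \<in> rel_interior \<tau>" using mem_rel_interior_face assms by blast
  then show ?thesis using cellF_eq[of "rel_interior \<tau>" y] rel_interior_subset by (auto simp: cells_eq)
qed

lemma linepath_in_cell:
  assumes "c \<in> cells K" "a \<in> c" "b \<in> closure c" "0 \<le> t" "t < 1"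
  shows "linepath a b t \<in> c"
proof -
  obtain \<sigma> where \<sigma>: "\<sigma> \<in> K" "c = rel_interior \<sigma>" using assms(1) by (auto simp: cells_eq)
  then have "closure c = closure \<sigma>" using complex_simplex convex_closure_rel_interior by blast
  then show ?thesis using linepath_in_rel_interior[of \<sigma> a b t] complex_simplex(2) \<sigma> assms by simp
qed

lemma linepath_comparable_cells:
  assumes "c \<in> cells K" "c' \<in> cells K" "cell_le c c' \<or> cell_le c' c" "a \<in> c" "p \<in> c'"
  shows "linepath a p ` {0..1} \<subseteq> c \<union> c'"
proof
  fix y assume "y \<in> linepath a p ` {0..1}"
  then obtain t where t: "t \<in> {0..1}" "y = linepath a p t" by blast
  show "y \<in> c \<union> c'"
  proof (cases "cell_le c' c")
    case True
    then have "p \<in> closure c" using assms(5) by (auto simp: cell_le_def)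
    then show ?thesis using linepath_in_cell[OF assms(1,4)] t assms(5)
      by (cases "t = 1") (auto simp: linepath_def)
  next
    case False
    then have "a \<in> closure c'" using assms(3,4) by (auto simp: cell_le_def)
    show ?thesis
    proof (cases "t = 0")
      case True
      then show ?thesis using t assms(4) by (simp add: linepath_def)
    next
      case False
      have "linepath a p t = linepath p a (1 - t)" by (simp add: linepath_def algebra_simps)
      moreover have "linepath p a (1 - t) \<in> c'"
        using linepath_in_cell[OF assms(2,5) \<open>a \<in> closure c'\<close>] t False by auto
      ultimately show ?thesis using t by simp
    qed
  qed
qed

lemma cell_le_cellF_nearby:
  assumes "y \<in> carrier_poly K"
  obtains e where "e > 0"
    "\<And>z. z \<in> carrier_poly K \<Longrightarrow> dist z y < e \<Longrightarrow> cell_le (cellF K y) (cellF K z)"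
proof -
  define Z where "Z = \<Union>{\<sigma>\<in>K. \<not> cellF K y \<subseteq> \<sigma>}"
  have "closed Z" unfolding Z_def
    using finite_complex complex_simplex(1) compact_imp_closed by (intro closed_Union) auto
  moreover have "y \<notin> Z" unfolding Z_def using cellF_subset_simplex by blast
  ultimately obtain e where e: "e > 0" "ball y e \<subseteq> - Z"
    using open_contains_ball[of "- Z"] by (auto simp: open_Compl)
  have "cell_le (cellF K y) (cellF K z)" if z: "z \<in> carrier_poly K" "dist z y < e" for z
  proof -
    obtain \<sigma> where \<sigma>: "\<sigma> \<in> K" "cellF K z = rel_interior \<sigma>" using cellF_cell(1)[OF z(1)] by (auto simp: cells_eq)
    then have "z \<in> \<sigma>" using cellF_cell(2)[OF z(1)] rel_interior_subset by blast
    moreover have "z \<notin> Z" using e z(2) by (auto simp: dist_commute)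
    ultimately show ?thesis using \<sigma> closure_rel_interior_simplex unfolding Z_def cell_le_def by auto
  qed
  then show ?thesis using that e(1) by blast
qed

lemma topo_path_cell_le_nearby:
  assumes "topo_path K x \<pi>" "s \<in> {0..1}"
  obtains d where "d > 0"
    "\<And>t. t \<in> {0..1} \<Longrightarrow> dist t s < d \<Longrightarrow> cell_le (cellF K (\<pi> s)) (cellF K (\<pi> t))"
proof -
  have car: "\<pi> t \<in> carrier_poly K" if "t \<in> {0..1}" for t using assms(1) that by (auto simp: topo_path_def)
  obtain e where e: "e > 0"
    "\<And>z. z \<in> carrier_poly K \<Longrightarrow> dist z (\<pi> s) < e \<Longrightarrow> cell_le (cellF K (\<pi> s)) (cellF K z)"
    using cell_le_cellF_nearby[OF car[OF assms(2)]] by blast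
  moreover obtain d where "d > 0" "\<forall>t\<in>{0..1}. dist t s < d \<longrightarrow> dist (\<pi> t) (\<pi> s) < e"
    using assms e(1) unfolding topo_path_def continuous_on_iff by blast
  ultimately show ?thesis using that car by blast
qed

text \<open>Connectedness of \<open>{0..<1}\<close>: near any time the path stays in cells above the current one,
  so the set of times whose cell is reachable by a zigzag is open and closed.\<close>

lemma topo_path_zigzag:
  assumes \<pi>: "topo_path K x \<pi>" and "s \<in> {0..<1}"
  shows "\<exists>m c. zigzag (cells K) cell_le m c \<and> c 0 = cellF K x \<and> c m = cellF K (\<pi> s)
                \<and> c ` {..m} \<subseteq> cellF K ` \<pi> ` {0..<1}"
    (is "?P s")
proof (rule connected_induction_simple[where S = "{0..<1}" and a = 0 and b = s and P = ?P])
  have car: "\<pi> t \<in> carrier_poly K" if "t \<in> {0..1}" for t using \<pi> that by (auto simp: topo_path_def)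
  have extend: "?P s2"
    if P1: "?P s1" and s2: "s2 \<in> {0..<1}" and cmp: "cell_le (cellF K (\<pi> s1)) (cellF K (\<pi> s2)) \<or> cell_le (cellF K (\<pi> s2)) (cellF K (\<pi> s1))"
    for s1 s2
  proof -
    obtain m c where c: "zigzag (cells K) cell_le m c" "c 0 = cellF K x" "c m = cellF K (\<pi> s1)"
      "c ` {..m} \<subseteq> cellF K ` \<pi> ` {0..<1}" using P1 by blast
    define c' where "c' = c(Suc m := cellF K (\<pi> s2))"
    have "cellF K (\<pi> s2) \<in> cells K" using cellF_cell(1) car s2 by simp
    then have "zigzag (cells K) cell_le (Suc m) c'"
      unfolding c'_def using zigzag_snoc[OF c(1)] c(3) cmp by simp
    moreover have "c' ` {..Suc m} \<subseteq> cellF K ` \<pi> ` {0..<1}"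
      using c(4) s2 by (auto simp: c'_def le_Suc_eq)
    moreover have "c' 0 = cellF K x" "c' (Suc m) = cellF K (\<pi> s2)" using c(2) by (simp_all add: c'_def)
    ultimately show ?thesis by blast
  qed
  show "connected {0..<1::real}" "(0::real) \<in> {0..<1}" "s \<in> {0..<1}" using assms(2) by auto
  show "?P 0" using \<pi> by (intro exI[of _ 0] exI[of _ "\<lambda>_. cellF K x"])
    (auto simp: topo_path_def zigzag_def cellF_cell car)
  fix a :: real assume a: "a \<in> {0..<1}"
  obtain d where d: "d > 0" "\<And>t. t \<in> {0..1} \<Longrightarrow> dist t a < d \<Longrightarrow> cell_le (cellF K (\<pi> a)) (cellF K (\<pi> t))"
    using topo_path_cell_le_nearby[OF \<pi>, of a] a by auto
  show "\<exists>T. openin (top_of_set {0..<1}) T \<and> a \<in> T \<and> (\<forall>u\<in>T. \<forall>v\<in>T. ?P u \<longrightarrow> ?P v)"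
  proof (intro exI[of _ "{0..<1} \<inter> ball a d"] conjI ballI impI)
    show "openin (top_of_set {0..<1}) ({0..<1} \<inter> ball a d)" by (intro openin_open_Int) auto
    show "a \<in> {0..<1} \<inter> ball a d" using a d by auto
    fix u v assume u: "u \<in> {0..<1} \<inter> ball a d" and v: "v \<in> {0..<1} \<inter> ball a d" and "?P u"
    then have "?P a" using extend[of u a] d a by (auto simp: dist_commute)
    then show "?P v" using extend[of a v] d v by (auto simp: dist_commute)
  qed
qed

lemma topo_path_pm_path:
  assumes \<pi>: "topo_path K x \<pi>"
  obtains l \<rho> where "pm_path (cells K) cell_le (cellF K x) l \<rho>" "\<rho> l = cellF K (\<pi> 1)"
    "\<rho> ` {..<l} \<subseteq> cellF K ` \<pi> ` {0..<1}"
proof -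
  \<comment> \<open>just before time 1 the path lies in cells above that of \<open>\<pi> 1\<close>: the final down-step\<close>
  obtain d where d: "d > 0" "\<And>t. t \<in> {0..1} \<Longrightarrow> dist t 1 < d \<Longrightarrow> cell_le (cellF K (\<pi> 1)) (cellF K (\<pi> t))"
    by (rule topo_path_cell_le_nearby[OF \<pi>, of 1]) auto
  define r where "r = max 0 (1 - d/2)"
  have r: "r \<in> {0..<1}" "dist r 1 < d" using d(1) by (auto simp: r_def dist_real_def)
  obtain m c where c: "zigzag (cells K) cell_le m c" "c 0 = cellF K x" "c m = cellF K (\<pi> r)"
      "c ` {..m} \<subseteq> cellF K ` \<pi> ` {0..<1}"
    using topo_path_zigzag[OF \<pi> r(1)] by blast
  have "\<pi> 1 \<in> carrier_poly K" using \<pi> by (auto simp: topo_path_def)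
  then have "cellF K (\<pi> 1) \<in> cells K" by (rule cellF_cell(1))
  moreover have "cell_le (cellF K (\<pi> 1)) (c m)" using d(2)[of r] r c(3) by simp
  ultimately obtain \<rho> where \<rho>: "pm_path (cells K) cell_le (c 0) (Suc (Suc m)) \<rho>"
    "\<rho> (Suc (Suc m)) = cellF K (\<pi> 1)" "\<rho> ` {..<Suc (Suc m)} \<subseteq> c ` {..m}"
    by (rule pm_path_close_zigzag[OF c(1) cell_le_refl])
  show ?thesis
  proof (rule that)
    show "pm_path (cells K) cell_le (cellF K x) (Suc (Suc m)) \<rho>" using \<rho>(1) c(2) by simp
    show "\<rho> ` {..<Suc (Suc m)} \<subseteq> cellF K ` \<pi> ` {0..<1}" using \<rho>(3) c(4) by blast
  qed (fact \<rho>(2))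
qed

lemma zigzag_cells_path:
  assumes "zigzag (cells K) cell_le n \<rho>" "1 \<le> n" "cell_le (\<rho> n) (\<rho> (n - 1))" "a \<in> \<rho> 0" "b \<in> \<rho> n"
  shows "\<exists>g. path g \<and> g 0 = a \<and> g 1 = b \<and> g ` {0..<1} \<subseteq> (\<Union>j<n. \<rho> j)"
  using assms(2,1,3-)
proof (induction n arbitrary: \<rho> a rule: nat_induct_at_least)
  case base
  have "\<rho> 0 \<in> cells K" "b \<in> closure (\<rho> 0)" using base by (auto simp: zigzag_def cell_le_def)
  then have "linepath a b ` {0..<1} \<subseteq> \<rho> 0" using linepath_in_cell base(3) by auto
  then show ?case by (intro exI[of _ "linepath a b"]) (simp add: linepath_0' linepath_1' lessThan_Suc)
next
  case (Suc n)
  have cells: "\<rho> 0 \<in> cells K" "\<rho> 1 \<in> cells K"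
    and cmp: "cell_le (\<rho> 0) (\<rho> 1) \<or> cell_le (\<rho> 1) (\<rho> 0)"
    using Suc.prems(1) by (auto simp: zigzag_def)
  obtain p where p: "p \<in> \<rho> 1" using cell_nonempty[OF cells(2)] by blast
  obtain g2 where g2: "path g2" "g2 0 = p" "g2 1 = b" "g2 ` {0..<1} \<subseteq> (\<Union>j<n. \<rho> (Suc j))"
    using Suc.IH[of "\<lambda>i. \<rho> (Suc i)" p] zigzag_shift[OF Suc.prems(1)] Suc.prems(2,4) Suc.hyps p
    by (auto simp: Suc_diff_1)
  have "(linepath a p +++ g2) ` {0..<1} \<subseteq> (\<rho> 0 \<union> \<rho> 1) \<union> (\<Union>j<n. \<rho> (Suc j))"
    using joinpaths_image_subset[OF linepath_comparable_cells[OF cells cmp Suc.prems(3) p] g2(4)] .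
  also have "\<dots> \<subseteq> (\<Union>j<Suc n. \<rho> j)" using Suc.hyps by (auto intro!: bexI[of _ 1])
  finally have "(linepath a p +++ g2) ` {0..<1} \<subseteq> (\<Union>j<Suc n. \<rho> j)" .
  moreover have "path (linepath a p +++ g2)" using g2(1,2) by (simp add: pathstart_def)
  moreover have "(linepath a p +++ g2) 0 = a" "(linepath a p +++ g2) 1 = b"
    using g2(3) by (simp_all add: joinpaths_def linepath_0')
  ultimately show ?case by blast
qed

lemma pm_path_topo_path:
  assumes \<rho>: "pm_path (cells K) cell_le (cellF K x) l \<rho>" and x: "x \<in> carrier_poly K"
  obtains g where "topo_path K x g" "cellF K (g 1) = \<rho> l" "cellF K ` g ` {0..<1} \<subseteq> \<rho> ` {..<l}"
proof -
  have l: "1 \<le> l" "zigzag (cells K) cell_le l \<rho>" "x \<in> \<rho> 0" "cell_le (\<rho> l) (\<rho> (l - 1))"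
    using \<rho> cellF_cell(2)[OF x] by (auto simp: pm_path_iff_zigzag)
  have cells: "\<rho> j \<in> cells K" if "j \<le> l" for j using l(2) that by (auto simp: zigzag_def)
  obtain b where b: "b \<in> \<rho> l" using cell_nonempty[OF cells[of l]] by blast
  obtain g where g: "path g" "g 0 = x" "g 1 = b" "g ` {0..<1} \<subseteq> (\<Union>j<l. \<rho> j)"
    using zigzag_cells_path[OF l(2,1,4,3) b] by blast
  have "g r \<in> carrier_poly K" if "r \<in> {0..1}" for r
  proof (cases "r = 1")
    case True
    then show ?thesis using g(3) b cells[of l] cell_subset_carrier by blast
  next
    case False
    then have "r \<in> {0..<1}" using that by simp
    then obtain j where "j < l" "g r \<in> \<rho> j" using g(4) by blast
    then show ?thesis using cells[of j] cell_subset_carrier by auto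
  qed
  then have "topo_path K x g" using g(1,2) by (auto simp: topo_path_def path_def)
  moreover have "cellF K (g 1) = \<rho> l" using cellF_eq[OF cells[of l]] b g(3) by simp
  moreover have "cellF K ` g ` {0..<1} \<subseteq> \<rho> ` {..<l}"
  proof (intro image_subsetI, elim imageE)
    fix y r assume "y = g r" "r \<in> {0..<1}"
    then obtain j where j: "j < l" "y \<in> \<rho> j" using g(4) by blast
    then have "cellF K y = \<rho> j" using cellF_eq[OF cells[of j]] by simp
    then show "cellF K y \<in> \<rho> ` {..<l}" using j(1) by blast
  qed
  ultimately show ?thesis by (rule that)
qed

end

section \<open>The polyhedral model and its cell poset model\<close>

lemma polyhedral_model_simplicial_complex: "polyhedral_model K V \<Longrightarrow> simplicial_complex K"
  by (simp add: polyhedral_model_def)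

lemma mem_val_iff_cellF_mem_cell_val:
  assumes PM: "polyhedral_model K V" and x: "x \<in> carrier_poly K"
  shows "x \<in> V p \<longleftrightarrow> cellF K x \<in> cell_val K V p"
proof -
  have K: "simplicial_complex K" using PM by (rule polyhedral_model_simplicial_complex)
  obtain S where S: "S \<subseteq> cells K" "V p = \<Union>S" using PM unfolding polyhedral_model_def by blast
  show ?thesis
  proof
    assume "x \<in> V p"
    then obtain c where "c \<in> S" "x \<in> c" using S(2) by blast
    then have "cellF K x = c" using cellF_eq[OF K] S(1) by blast
    then show "cellF K x \<in> cell_val K V p" using S \<open>c \<in> S\<close> by (auto simp: cell_val_def)
  qed (use cellF_cell[OF K x] in \<open>auto simp: cell_val_def\<close>)
qed

lemma sat_pos_Eta_if_sat_poly_Eta: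
  assumes K: "simplicial_complex K"
    and \<phi>: "\<And>y. y \<in> carrier_poly K \<Longrightarrow>
      sat_poly K V y \<phi> \<longleftrightarrow> sat_pos (cells K) cell_le (cell_val K V) (cellF K y) \<phi>"
    and \<psi>: "\<And>y. y \<in> carrier_poly K \<Longrightarrow>
      sat_poly K V y \<psi> \<longleftrightarrow> sat_pos (cells K) cell_le (cell_val K V) (cellF K y) \<psi>"
    and "sat_poly K V x (Eta \<phi> \<psi>)"
  shows "sat_pos (cells K) cell_le (cell_val K V) (cellF K x) (Eta \<phi> \<psi>)"
proof -
  obtain \<pi> where \<pi>: "topo_path K x \<pi>" "sat_poly K V (\<pi> 1) \<psi>" "\<forall>r\<in>{0..<1}. sat_poly K V (\<pi> r) \<phi>"
    using assms(4) unfolding sat_poly.simps by blast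
  have car: "\<pi> r \<in> carrier_poly K" if "r \<in> {0..1}" for r using \<pi>(1) that by (auto simp: topo_path_def)
  obtain l \<rho> where \<rho>: "pm_path (cells K) cell_le (cellF K x) l \<rho>" "\<rho> l = cellF K (\<pi> 1)"
    "\<rho> ` {..<l} \<subseteq> cellF K ` \<pi> ` {0..<1}"
    by (rule topo_path_pm_path[OF K \<pi>(1)])
  have "\<pi> 1 \<in> carrier_poly K" using car by simp
  then have "sat_pos (cells K) cell_le (cell_val K V) (\<rho> l) \<psi>" using \<psi> \<pi>(2) \<rho>(2) by metis
  moreover have "sat_pos (cells K) cell_le (cell_val K V) (\<rho> i) \<phi>" if i: "i < l" for i
  proof -
    obtain r where r: "r \<in> {0..<1}" "\<rho> i = cellF K (\<pi> r)" using \<rho>(3) i by blast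
    then have "\<pi> r \<in> carrier_poly K" using car by simp
    then show ?thesis using \<phi> \<pi>(3) r by metis
  qed
  ultimately show ?thesis using \<rho>(1) unfolding sat_pos.simps by blast
qed

lemma sat_poly_Eta_if_sat_pos_Eta:
  assumes K: "simplicial_complex K" and x: "x \<in> carrier_poly K"
    and \<phi>: "\<And>y. y \<in> carrier_poly K \<Longrightarrow>
      sat_poly K V y \<phi> \<longleftrightarrow> sat_pos (cells K) cell_le (cell_val K V) (cellF K y) \<phi>"
    and \<psi>: "\<And>y. y \<in> carrier_poly K \<Longrightarrow>
      sat_poly K V y \<psi> \<longleftrightarrow> sat_pos (cells K) cell_le (cell_val K V) (cellF K y) \<psi>"
    and "sat_pos (cells K) cell_le (cell_val K V) (cellF K x) (Eta \<phi> \<psi>)"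
  shows "sat_poly K V x (Eta \<phi> \<psi>)"
proof -
  obtain l \<rho> where \<rho>: "pm_path (cells K) cell_le (cellF K x) l \<rho>"
    "sat_pos (cells K) cell_le (cell_val K V) (\<rho> l) \<psi>"
    "\<forall>i<l. sat_pos (cells K) cell_le (cell_val K V) (\<rho> i) \<phi>"
    using assms(5) by auto
  obtain g where g: "topo_path K x g" "cellF K (g 1) = \<rho> l" "cellF K ` g ` {0..<1} \<subseteq> \<rho> ` {..<l}"
    by (rule pm_path_topo_path[OF K \<rho>(1) x])
  have car: "g r \<in> carrier_poly K" if "r \<in> {0..1}" for r using g(1) that by (auto simp: topo_path_def)
  have "sat_poly K V (g 1) \<psi>" using \<psi>[OF car[of 1]] \<rho>(2) g(2) by simp
  moreover have "sat_poly K V (g r) \<phi>" if r: "r \<in> {0..<1}" for r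
  proof -
    obtain i where "i < l" "cellF K (g r) = \<rho> i" using g(3) r by blast
    then show ?thesis using \<phi>[of "g r"] car[of r] \<rho>(3) r by simp
  qed
  ultimately show ?thesis using g(1) by (auto intro!: exI[of _ g])
qed

lemma sat_poly_iff_sat_pos:
  assumes PM: "polyhedral_model K V" and "x \<in> carrier_poly K"
  shows "sat_poly K V x \<phi> \<longleftrightarrow> sat_pos (cells K) cell_le (cell_val K V) (cellF K x) \<phi>"
  using \<open>x \<in> carrier_poly K\<close>
proof (induction \<phi> arbitrary: x)
  case (Atom p)
  then show ?case using mem_val_iff_cellF_mem_cell_val[OF PM] by simp
next
  case (Eta \<phi> \<psi>)
  have K: "simplicial_complex K" using PM by (rule polyhedral_model_simplicial_complex)
  show ?case
    using sat_pos_Eta_if_sat_poly_Eta[OF K Eta.IH] sat_poly_Eta_if_sat_pos_Eta[OF K Eta.prems Eta.IH]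
    by blast
qed simp_all

lemma finite_poly_theories:
  assumes "polyhedral_model K V"
  shows "finite (poly.theory_of K V ` carrier_poly K)"
proof -
  have K: "simplicial_complex K" using assms by (rule polyhedral_model_simplicial_complex)
  have "poly.theory_of K V x = pos.theory_of (cells K) cell_le (cell_val K V) (cellF K x)"
    if "x \<in> carrier_poly K" for x
    using sat_poly_iff_sat_pos[OF assms that] by (simp add: poly.theory_of_def pos.theory_of_def)
  then have "poly.theory_of K V ` carrier_poly K
      \<subseteq> pos.theory_of (cells K) cell_le (cell_val K V) ` cells K"
    using cellF_cell(1)[OF K] by blast
  then show ?thesis using finite_cells[OF K] finite_subset by blast
qed

lemma weak_simp_bisim_imp_eq_eta_poly:
  assumes B: "weak_simp_bisim K V B" and "(x1, x2) \<in> B"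
  shows "eq_eta_poly K V x1 x2"
  unfolding eq_eta_poly_def
proof
  fix \<phi>
  show "sat_poly K V x1 \<phi> \<longleftrightarrow> sat_poly K V x2 \<phi>"
  proof (rule poly.bisimulation_preserves_formulas[of B])
    show "sym B" using B by (simp add: weak_simp_bisim_def)
    show "sat_poly K V b (Atom p)" if "(a, b) \<in> B" "sat_poly K V a (Atom p)" for a b p
      using B that unfolding weak_simp_bisim_def by auto
    show "sat_poly K V b (Eta \<phi>' \<psi>)"
      if \<phi>': "\<And>a b. (a, b) \<in> B \<Longrightarrow> sat_poly K V a \<phi>' \<longleftrightarrow> sat_poly K V b \<phi>'"
        and \<psi>: "\<And>a b. (a, b) \<in> B \<Longrightarrow> sat_poly K V a \<psi> \<longleftrightarrow> sat_poly K V b \<psi>"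
        and ab: "(a, b) \<in> B" and a: "sat_poly K V a (Eta \<phi>' \<psi>)" for \<phi>' \<psi> a b
    proof -
      obtain \<pi>1 where \<pi>1: "topo_path K a \<pi>1" "sat_poly K V (\<pi>1 1) \<psi>"
        "\<forall>r\<in>{0..<1}. sat_poly K V (\<pi>1 r) \<phi>'" using a by auto
      obtain \<pi>2 where \<pi>2: "topo_path K b \<pi>2" "(\<pi>1 1, \<pi>2 1) \<in> B"
        "\<forall>r2\<in>{0..<1}. \<exists>r1\<in>{0..<1}. (\<pi>1 r1, \<pi>2 r2) \<in> B"
        using B ab \<pi>1(1) unfolding weak_simp_bisim_def by blast
      have "sat_poly K V (\<pi>2 1) \<psi>" using \<psi>[OF \<pi>2(2)] \<pi>1(2) by blast
      moreover have "sat_poly K V (\<pi>2 r) \<phi>'" if r: "r \<in> {0..<1}" for r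
      proof -
        obtain r1 where "r1 \<in> {0..<1}" "(\<pi>1 r1, \<pi>2 r) \<in> B" using \<pi>2(3) r by blast
        then show ?thesis using \<phi>' \<pi>1(3) by blast
      qed
      ultimately show ?thesis using \<pi>2(1) by (auto intro!: exI[of _ \<pi>2])
    qed
  qed (fact \<open>(x1, x2) \<in> B\<close>)
qed

lemma eq_eta_poly_iff: "eq_eta_poly K V a b \<longleftrightarrow> poly.theory_of K V a = poly.theory_of K V b"
  by (auto simp: eq_eta_poly_def poly.theory_of_def)

lemma eq_eta_poly_weak_simp_bisim:
  assumes PM: "polyhedral_model K V"
  shows "weak_simp_bisim K V {(a, b). a \<in> carrier_poly K \<and> b \<in> carrier_poly K \<and> eq_eta_poly K V a b}"
    (is "weak_simp_bisim K V ?B")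
  unfolding weak_simp_bisim_def
proof (intro conjI allI impI)
  show "?B \<subseteq> carrier_poly K \<times> carrier_poly K" by auto
  show "sym ?B" by (auto simp: sym_def eq_eta_poly_def)
next
  fix a b p assume "(a, b) \<in> ?B"
  then have "sat_poly K V a (Atom p) \<longleftrightarrow> sat_poly K V b (Atom p)"
    unfolding eq_eta_poly_def by blast
  then show "a \<in> V p \<longleftrightarrow> b \<in> V p" by simp
next
  fix a b \<pi>1 assume ab: "(a, b) \<in> ?B" and \<pi>1: "topo_path K a \<pi>1"
  let ?th = "poly.theory_of K V"
  have fin: "finite (?th ` carrier_poly K)" using finite_poly_theories[OF PM] .
  have car1: "\<pi>1 r \<in> carrier_poly K" if "r \<in> {0..1}" for r
    using \<pi>1 that by (auto simp: topo_path_def)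
  obtain \<theta>A where \<theta>A: "\<forall>y\<in>carrier_poly K. sat_poly K V y \<theta>A \<longleftrightarrow> ?th y \<in> ?th ` \<pi>1 ` {0..<1}"
    using poly.definable_theory_sets[OF fin, of "?th ` \<pi>1 ` {0..<1}"] by blast
  obtain \<theta>D where \<theta>D: "\<forall>y\<in>carrier_poly K. sat_poly K V y \<theta>D \<longleftrightarrow> ?th y \<in> {?th (\<pi>1 1)}"
    using poly.definable_theory_sets[OF fin, of "{?th (\<pi>1 1)}"] by blast
  have "sat_poly K V (\<pi>1 r) \<theta>A" if "r \<in> {0..<1}" for r
    using \<theta>A car1[of r] that by simp
  moreover have "sat_poly K V (\<pi>1 1) \<theta>D" using \<theta>D car1 by simp
  ultimately have "sat_poly K V a (Eta \<theta>A \<theta>D)" using \<pi>1 unfolding sat_poly.simps by blast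
  then have "sat_poly K V b (Eta \<theta>A \<theta>D)" using ab unfolding eq_eta_poly_def by blast
  then obtain \<pi>2 where \<pi>2: "topo_path K b \<pi>2" "sat_poly K V (\<pi>2 1) \<theta>D"
    "\<forall>r\<in>{0..<1}. sat_poly K V (\<pi>2 r) \<theta>A" unfolding sat_poly.simps by blast
  have car2: "\<pi>2 r \<in> carrier_poly K" if "r \<in> {0..1}" for r
    using \<pi>2(1) that by (auto simp: topo_path_def)
  have "(\<pi>1 1, \<pi>2 1) \<in> ?B" using \<theta>D \<pi>2(2) car1[of 1] car2[of 1] by (simp add: eq_eta_poly_iff)
  moreover have "\<exists>r1\<in>{0..<1}. (\<pi>1 r1, \<pi>2 r2) \<in> ?B" if r2: "r2 \<in> {0..<1}" for r2
  proof -
    have "sat_poly K V (\<pi>2 r2) \<theta>A" using \<pi>2(3) r2 by blast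
    then have "?th (\<pi>2 r2) \<in> ?th ` \<pi>1 ` {0..<1}" using \<theta>A car2[of r2] r2 by simp
    then obtain r1 where "r1 \<in> {0..<1}" "?th (\<pi>2 r2) = ?th (\<pi>1 r1)" by blast
    then show ?thesis using car1[of r1] car2[of r2] r2 by (auto simp: eq_eta_poly_iff)
  qed
  ultimately show "\<exists>\<pi>2. topo_path K b \<pi>2 \<and> (\<pi>1 1, \<pi>2 1) \<in> ?B \<and>
                 (\<forall>r2\<in>{0..<1}. \<exists>r1\<in>{0..<1}. (\<pi>1 r1, \<pi>2 r2) \<in> ?B)"
    using \<pi>2(1) by blast
qed

theorem corollary1:
  fixes K :: "'a::euclidean_space set set" and V :: "'p \<Rightarrow> 'a set"
  assumes "polyhedral_model K V"
    and "x1 \<in> carrier_poly K" and "x2 \<in> carrier_poly K"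
  shows "(approx_tri K V x1 x2 \<longleftrightarrow> eq_eta_poly K V x1 x2)
       \<and> (eq_eta_poly K V x1 x2 \<longleftrightarrow> eq_eta_pos (cells K) cell_le (cell_val K V) (cellF K x1) (cellF K x2))
       \<and> (eq_eta_pos (cells K) cell_le (cell_val K V) (cellF K x1) (cellF K x2)
            \<longleftrightarrow> approx_pm (cells K) cell_le (cell_val K V) (cellF K x1) (cellF K x2))"
proof (intro conjI)
  have K: "simplicial_complex K" using assms(1) by (rule polyhedral_model_simplicial_complex)
  show "approx_tri K V x1 x2 \<longleftrightarrow> eq_eta_poly K V x1 x2"
  proof
    show "approx_tri K V x1 x2 \<Longrightarrow> eq_eta_poly K V x1 x2"
      unfolding approx_tri_def using weak_simp_bisim_imp_eq_eta_poly by blast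
    show "eq_eta_poly K V x1 x2 \<Longrightarrow> approx_tri K V x1 x2"
      unfolding approx_tri_def using eq_eta_poly_weak_simp_bisim[OF assms(1)] assms(2,3) by blast
  qed
  show "eq_eta_poly K V x1 x2 \<longleftrightarrow> eq_eta_pos (cells K) cell_le (cell_val K V) (cellF K x1) (cellF K x2)"
    using sat_poly_iff_sat_pos[OF assms(1)] assms(2,3) by (simp add: eq_eta_poly_def eq_eta_pos_def)
  have cells: "cellF K x1 \<in> cells K" "cellF K x2 \<in> cells K" using cellF_cell(1)[OF K] assms(2,3) by auto
  show "eq_eta_pos (cells K) cell_le (cell_val K V) (cellF K x1) (cellF K x2)
      \<longleftrightarrow> approx_pm (cells K) cell_le (cell_val K V) (cellF K x1) (cellF K x2)"
  proof
    show "eq_eta_pos (cells K) cell_le (cell_val K V) (cellF K x1) (cellF K x2)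
        \<Longrightarrow> approx_pm (cells K) cell_le (cell_val K V) (cellF K x1) (cellF K x2)"
      unfolding approx_pm_def using eq_eta_pos_weak_pm_bisim[of "cells K" cell_le "cell_val K V", OF cell_le_refl finite_cells[OF K]] cells
      by blast
    show "approx_pm (cells K) cell_le (cell_val K V) (cellF K x1) (cellF K x2)
        \<Longrightarrow> eq_eta_pos (cells K) cell_le (cell_val K V) (cellF K x1) (cellF K x2)"
      unfolding approx_pm_def using weak_pm_bisim_imp_eq_eta_pos[of "cells K" cell_le "cell_val K V", OF cell_le_refl] by blast
  qed
qed

end
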